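(* Let $W=I_2(m)$, $m\ge3$. Writing $X^{(m)}_{\alpha\ldots}=\sum_{w\in W}q_w\delta_w$ with $q_w\in\mathcal{Q}$, the coefficient $c^{(m-2)}_{\alpha,\beta}$ of $\delta^{(m-2)}_{\alpha\ldots}$ equals $$c^{(m-2)}_{\alpha,\beta}=\begin{cases}\ \ \upsilon^{(2)}_\alpha\,S^{(0,m-2)}_\alpha(y_\alpha y_\beta),& m\text{ even},\\ -\upsilon^{(2)}_\alpha\,S^{(0,m-2)}_\alpha(y_\alpha y_\beta),& m\text{ odd}.\end{cases}$$ Symmetrically (interchanging $\alpha$ and $\beta$), the coefficient $c^{(m-2)}_{\beta,\alpha}$ of $\delta^{(m-2)}_{\beta\ldots}$ in $X^{(m)}_{\beta\ldots}$ is given by the same formula with $\alpha$ and $\beta$ interchanged.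
   Context: General setup: $W$ a finite real reflection group with root system $\Sigma$; $R$ an integral domain containing the ring $\mathcal{R}\subset\mathbb{R}$ generated by the coefficients of roots in the basis of simple roots; $F$ a one-dimensional commutative formal group law over $R$; $\mathcal{S}$ the formal root algebra (the quotient of the completed polynomial ring $R[[x_\lambda:\lambda\in\Lambda]]$, $\Lambda$ the lattice spanned by $\mathcal{R}$-multiples of roots, by the closed ideal generated by $x_0$ and the relations $x_{e_i\gamma+e_j\gamma'}=(e_ix_\gamma)+_F(e_jx_{\gamma'})$ for roots $\gamma,\gamma'$ and a fixed $\mathbb{Z}$-basis $(e_1=1,\dots,e_l)$ of $\mathcal{R}$), with $W$ acting by $w(x_\lambda)=x_{w(\lambda)}$; $\mathcal{Q}$ its localization at all $x_\gamma$; $\mathcal{Q}_W=\mathcal{Q}\otimes_RR[W]$ with left $\mathcal{Q}$-basis $\{\delta_w\}$ and product $(q\delta_w)(q'\delta_{w'})=q\,w(q')\delta_{ww'}$, $\mathbf 1=\delta_1$; $\delta_\gamma=\delta_{s_\gamma}$, $X_\gamma=\frac1{x_\gamma}(\mathbf 1-\delta_\gamma)$. Dihedral notation: $W=I_2(m)$, simple roots $\alpha,\beta$; $y_\gamma=1/x_\gamma\in\mathcal{Q}$; $W$ acts on products multiplicatively, e.g. $s(y_\alpha y_\beta)=s(y_\alpha)s(y_\beta)$, $s(y_\gamma)=y_{s(\gamma)}$. $X^{(i)}_{\alpha\ldots}=X_\alpha X_\beta X_\alpha\cdots$ ($i$ alternating factors), $X^{(i)}_{\beta\ldots}$, $\delta^{(i)}_{\alpha\ldots}=\delta_\alpha\delta_\beta\cdots$,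 $\delta^{(i)}_{\beta\ldots}$, $s^{(i)}_{\alpha\ldots}=s_\alpha s_\beta\cdots$, $s^{(i)}_{\beta\ldots}$ ($i$ factors; $i=0$ gives $\mathbf 1$ / identity). $\omega_j=\alpha$ for $j$ even, $\omega_j=\beta$ for $j$ odd. For $0\le i\le m-1$: $\upsilon^{(i)}_\alpha=\prod_{j=0}^{m-i-1}s^{(j)}_{\alpha\ldots}(y_{\omega_j})$ and $\upsilon^{(i)}_\beta=\prod_{j=0}^{m-i-1}s^{(j)}_{\beta\ldots}(y_{\omega_{j+1}})$ (empty product $=1$). For $i\le j$: $S^{(i,j)}_\alpha(u)=\sum_{k=i}^js^{(k)}_{\alpha\ldots}(u)$, $S^{(i,j)}_\beta(u)=\sum_{k=i}^js^{(k)}_{\beta\ldots}(u)$; an empty range ($j<i$) gives $0$. *)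

theory Defs
  imports "HOL-Analysis.Analysis"
begin

text \<open>The Euclidean plane is modelled by the type complex (a real inner product space).
  Reflection in the hyperplane orthogonal to a nonzero vector g.\<close>
definition rrefl :: "'a::real_inner \<Rightarrow> 'a \<Rightarrow> 'a" where
  "rrefl g v = v - (2 * (v \<bullet> g) / (g \<bullet> g)) *\<^sub>R g"

text \<open>Simple roots of I_2(m): unit vectors with angle pi - pi/m between them.\<close>
definition alpha :: complex where
  "alpha = 1"

definition beta :: "nat \<Rightarrow> complex" where
  "beta m = cis (pi - pi / real m)"

inductive_set refl_group :: "'a::real_inner set \<Rightarrow> ('a \<Rightarrow> 'a) set" for gens where
  id_in: "id \<in> refl_group gens"
| step: "a \<in> gens \<Longrightarrow> w \<in> refl_group gens \<Longrightarrow> rrefl a \<circ> w \<in> refl_group gens"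

definition root_sys :: "'a::real_inner set \<Rightarrow> 'a set" where
  "root_sys gens = {w a | w a. w \<in> refl_group gens \<and> a \<in> gens}"

definition Wdih :: "nat \<Rightarrow> (complex \<Rightarrow> complex) set" where
  "Wdih m = refl_group {alpha, beta m}"

definition Sigma :: "nat \<Rightarrow> complex set" where
  "Sigma m = root_sys {alpha, beta m}"

fun salt :: "'a::real_inner \<Rightarrow> 'a \<Rightarrow> nat \<Rightarrow> ('a \<Rightarrow> 'a)" where
  "salt a b 0 = id"
| "salt a b (Suc i) = rrefl a \<circ> salt b a i"

text \<open>An element sum_w q_w delta_w of Q_W is represented by its coefficient function
  w \<mapsto> q_w (supported on W).  Here act w is the action of w on Q.
  Product: (q delta_v)(q' delta_w) = q v(q') delta_{vw}.\<close>
definition qw_mult ::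
  "('b \<Rightarrow> 'b) set \<Rightarrow> (('b \<Rightarrow> 'b) \<Rightarrow> 'q::comm_ring_1 \<Rightarrow> 'q)
     \<Rightarrow> (('b \<Rightarrow> 'b) \<Rightarrow> 'q) \<Rightarrow> (('b \<Rightarrow> 'b) \<Rightarrow> 'q) \<Rightarrow> (('b \<Rightarrow> 'b) \<Rightarrow> 'q)" where
  "qw_mult W act f g = (\<lambda>u. \<Sum>(v, w) \<in> {(v, w). v \<in> W \<and> w \<in> W \<and> v \<circ> w = u}. f v * act v (g w))"

definition qw_delta :: "('b \<Rightarrow> 'b) \<Rightarrow> (('b \<Rightarrow> 'b) \<Rightarrow> 'q::comm_ring_1)" where
  "qw_delta w = (\<lambda>u. if u = w then 1 else 0)"

text \<open>X_g = y_g (1 - delta_g), with y_g = 1/x_g.\<close>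
definition qw_X :: "('b::real_inner \<Rightarrow> 'q::comm_ring_1) \<Rightarrow> 'b \<Rightarrow> (('b \<Rightarrow> 'b) \<Rightarrow> 'q)" where
  "qw_X y g = (\<lambda>u. y g * (qw_delta id u - qw_delta (rrefl g) u))"

fun Xalt ::
  "('b::real_inner \<Rightarrow> 'b) set \<Rightarrow> (('b \<Rightarrow> 'b) \<Rightarrow> 'q::comm_ring_1 \<Rightarrow> 'q) \<Rightarrow> ('b \<Rightarrow> 'q)
     \<Rightarrow> 'b \<Rightarrow> 'b \<Rightarrow> nat \<Rightarrow> (('b \<Rightarrow> 'b) \<Rightarrow> 'q)" where
  "Xalt W act y a b 0 = qw_delta id"
| "Xalt W act y a b (Suc i) = qw_mult W act (qw_X y a) (Xalt W act y b a i)"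

definition upsilon ::
  "(('b::real_inner \<Rightarrow> 'b) \<Rightarrow> 'q::comm_ring_1 \<Rightarrow> 'q) \<Rightarrow> ('b \<Rightarrow> 'q) \<Rightarrow> 'b \<Rightarrow> 'b \<Rightarrow> nat \<Rightarrow> nat \<Rightarrow> 'q" where
  "upsilon act y a b m i = (\<Prod>j\<in>{0..<m - i}. act (salt a b j) (y (if even j then a else b)))"

definition Ssum ::
  "(('b::real_inner \<Rightarrow> 'b) \<Rightarrow> 'q::comm_ring_1 \<Rightarrow> 'q) \<Rightarrow> 'b \<Rightarrow> 'b \<Rightarrow> nat \<Rightarrow> nat \<Rightarrow> 'q \<Rightarrow> 'q" where
  "Ssum act a b i j u = (\<Sum>k\<in>{i..j}. act (salt a b k) u)"

end

theory Submission
  imports Defs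
begin

text \<open>
  Only \<delta>_1 and \<delta>_{s_a} occur in X_a, so the coefficients c^{(n)}_{a,b}(u) of X^{(n)}_{a\<dots>}
  satisfy c^{(n+1)}_{a,b}(u) = y_a (c^{(n)}_{b,a}(u) - s_a(c^{(n)}_{b,a}(s_a u))).  As the
  alternating words of length below 2m are pairwise distinct, this recursion shows that
  X^{(n)} has no component on alternating words longer than n, that its coefficient at the
  word of length n is \<plusminus>\<upsilon>, and then, by induction on n, that its coefficient at the word of
  length n - 2 is \<plusminus>\<upsilon> S, the sum S gaining one term at each step.
\<close>

lemma rrefl_rrefl:
  fixes g :: "'a::real_inner"
  assumes "g \<noteq> 0"
  shows "rrefl g (rrefl g v) = v"
proof -
  have "rrefl g v \<bullet> g = - (v \<bullet> g)"
    using assms by (simp add: rrefl_def inner_diff_left)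
  then show ?thesis by (simp add: rrefl_def)
qed

lemma rrefl_neq_id:
  fixes g :: "'a::real_inner"
  assumes "g \<noteq> 0"
  shows "rrefl g \<noteq> id"
proof
  assume "rrefl g = id"
  moreover have "rrefl g g = - g" using assms by (simp add: rrefl_def scaleR_2)
  ultimately have "g + g = 0" by (metis add.right_inverse id_apply)
  with assms show False by (simp flip: scaleR_2)
qed

lemma rrefl_complex_unit: "cmod g = 1 \<Longrightarrow> rrefl g v = - (g\<^sup>2) * cnj v"
proof -
  assume "cmod g = 1"
  then have gg: "g \<bullet> g = 1" and n: "(Re g)\<^sup>2 + (Im g)\<^sup>2 = 1"
    by (simp_all add: power2_norm_eq_inner[symmetric] cmod_def)
  show ?thesis unfolding rrefl_def gg
    by (simp add: complex_eq_iff inner_complex_def power2_eq_square algebra_simps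
        scaleR_conv_of_real) (use n in algebra)
qed

lemma cmod_alpha: "cmod alpha = 1"
  by (simp add: alpha_def)

lemma cmod_beta: "cmod (beta m) = 1"
  by (simp add: beta_def)

lemma beta_power_eq_cis: "beta m ^ (2 * i) = cis (real (2 * i) * (pi - pi / real m))"
  unfolding beta_def by (rule Complex.DeMoivre)

lemma beta_power_neq_1:
  assumes "0 < i" "i < m"
  shows "beta m ^ (2 * i) \<noteq> 1"
proof
  assume "beta m ^ (2 * i) = 1"
  then obtain n :: int where n: "real (2 * i) * (pi - pi / real m) = of_int (2 * n) * pi"
    by (auto simp: beta_power_eq_cis cis_conv_exp exp_eq_1)
  have "2 * pi * (real i - real i / real m) = 2 * pi * of_int n"
    using n by (simp add: algebra_simps)
  then have "real i - real i / real m = of_int n" by simp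
  then have k: "real i / real m = of_int (int i - n)" by simp
  have "0 < real i / real m" "real i / real m < 1" using assms by auto
  with k have "0 < int i - n" "int i - n < 1" by linarith+
  then show False by simp
qed

lemma beta_power_2m: "0 < m \<Longrightarrow> beta m ^ (2 * m) = 1"
proof -
  assume m: "0 < m"
  have angle: "real (2 * m) * (pi - pi / real m) = 2 * pi * real (m - 1)"
    using m by (simp add: field_simps)
  show ?thesis
    unfolding beta_power_eq_cis angle by (rule cis_multiple_2pi) simp
qed

definition simple_pair :: "nat \<Rightarrow> complex \<Rightarrow> complex \<Rightarrow> bool" where
  "simple_pair m a b \<longleftrightarrow> (a = alpha \<and> b = beta m) \<or> (a = beta m \<and> b = alpha)"

lemma simple_pair_swap: "simple_pair m a b \<Longrightarrow> simple_pair m b a"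
  by (auto simp: simple_pair_def)

lemma simple_pair_cmod: "simple_pair m a b \<Longrightarrow> cmod a = 1 \<and> cmod b = 1"
  by (auto simp: simple_pair_def cmod_alpha cmod_beta)

lemma salt_double:
  assumes "cmod a = 1" "cmod b = 1"
  shows "salt a b (2 * i) = (\<lambda>z. (a\<^sup>2 * cnj (b\<^sup>2)) ^ i * z)"
proof (induction i)
  case 0
  show ?case by (auto simp: id_def)
next
  case (Suc i)
  have e: "2 * Suc i = Suc (Suc (2 * i))" by simp
  show ?case
    unfolding e salt.simps Suc.IH
    using assms by (auto simp: rrefl_complex_unit fun_eq_iff algebra_simps)
qed

lemma salt_Suc_double:
  assumes "cmod a = 1" "cmod b = 1"
  shows "salt a b (Suc (2 * i)) = (\<lambda>z. (- (a\<^sup>2) * cnj ((b\<^sup>2 * cnj (a\<^sup>2)) ^ i)) * cnj z)"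
  using assms by (auto simp: salt_double rrefl_complex_unit fun_eq_iff)

lemma mult_cnj_neq_id: "(\<lambda>z. c * cnj z) \<noteq> id"
proof
  assume h: "(\<lambda>z. c * cnj z) = id"
  have "c = 1" using fun_cong[OF h, of 1] by simp
  moreover have "c * cnj \<i> = \<i>" using fun_cong[OF h, of \<i>] by simp
  ultimately show False by (simp add: complex_eq_iff)
qed

lemma simple_pair_rotation_power_neq_1:
  assumes "simple_pair m a b" "0 < i" "i < m"
  shows "(a\<^sup>2 * cnj (b\<^sup>2)) ^ i \<noteq> 1"
proof -
  have "beta m ^ (2 * i) \<noteq> 1" using beta_power_neq_1 assms(2,3) .
  moreover have "(a\<^sup>2 * cnj (b\<^sup>2)) ^ i \<in> {beta m ^ (2 * i), cnj (beta m ^ (2 * i))}"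
    using assms(1) by (auto simp: simple_pair_def alpha_def power_mult)
  ultimately show ?thesis by (metis complex_cnj_one_iff empty_iff insert_iff)
qed

lemma salt_neq_id:
  assumes p: "simple_pair m a b" and j: "0 < j" "j < 2 * m"
  shows "salt a b j \<noteq> id"
proof -
  have u: "cmod a = 1" "cmod b = 1" using simple_pair_cmod[OF p] by auto
  define i where "i = j div 2"
  have "j = 2 * i \<or> j = Suc (2 * i)" unfolding i_def by presburger
  then show ?thesis
  proof
    assume ji: "j = 2 * i"
    then have "0 < i" "i < m" using j by auto
    then have "(a\<^sup>2 * cnj (b\<^sup>2)) ^ i \<noteq> 1"
      using simple_pair_rotation_power_neq_1[OF p] by blast
    then show ?thesis
      unfolding ji salt_double[OF u] by (auto simp: fun_eq_iff dest: spec[of _ 1])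
  next
    assume ji: "j = Suc (2 * i)"
    show ?thesis unfolding ji salt_Suc_double[OF u] by (rule mult_cnj_neq_id)
  qed
qed

lemma refl_group_subset_roots_of_unity:
  assumes "\<And>a. a \<in> gens \<Longrightarrow> cmod a = 1 \<and> a ^ (2 * m) = 1"
  shows "refl_group gens \<subseteq>
    (\<lambda>c z. c * z) ` {c. c ^ (2 * m) = 1} \<union> (\<lambda>c z. c * cnj z) ` {c. c ^ (2 * m) = 1}"
proof
  fix w assume "w \<in> refl_group gens"
  then show "w \<in> (\<lambda>c z. c * z) ` {c. c ^ (2 * m) = 1} \<union> (\<lambda>c z. c * cnj z) ` {c. c ^ (2 * m) = 1}"
  proof (induction rule: refl_group.induct)
    case id_in
    have "id = (\<lambda>z::complex. 1 * z)" by (simp add: fun_eq_iff)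
    then show ?case by force
  next
    case (step a w)
    have a: "cmod a = 1" "a ^ (2 * m) = 1" using assms step.hyps(1) by auto
    have root: "(- (a\<^sup>2) * cnj c) ^ (2 * m) = 1" if "c ^ (2 * m) = 1" for c
    proof -
      have "(- (a\<^sup>2) * cnj c) ^ (2 * m) = ((-1) ^ m)\<^sup>2 * (a ^ (2 * m))\<^sup>2 * cnj (c ^ (2 * m))"
        by (simp add: power_mult_distrib power_mult[symmetric] mult.commute)
      then show ?thesis using a that by (simp flip: power_mult)
    qed
    from step.IH show ?case
    proof
      assume "w \<in> (\<lambda>c z. c * z) ` {c. c ^ (2 * m) = 1}"
      then obtain c where c: "c ^ (2 * m) = 1" "w = (\<lambda>z. c * z)" by auto
      then have "rrefl a \<circ> w = (\<lambda>z. (- (a\<^sup>2) * cnj c) * cnj z)"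
        using a by (auto simp: rrefl_complex_unit)
      then show ?case using root[OF c(1)] by blast
    next
      assume "w \<in> (\<lambda>c z. c * cnj z) ` {c. c ^ (2 * m) = 1}"
      then obtain c where c: "c ^ (2 * m) = 1" "w = (\<lambda>z. c * cnj z)" by auto
      then have "rrefl a \<circ> w = (\<lambda>z. (- (a\<^sup>2) * cnj c) * z)"
        using a by (auto simp: rrefl_complex_unit)
      then show ?case using root[OF c(1)] by blast
    qed
  qed
qed

lemma finite_Wdih: "0 < m \<Longrightarrow> finite (Wdih m)"
proof -
  assume m: "0 < m"
  have "Wdih m \<subseteq>
      (\<lambda>c z. c * z) ` {c. c ^ (2 * m) = 1} \<union> (\<lambda>c z. c * cnj z) ` {c. c ^ (2 * m) = 1}"
    unfolding Wdih_def
    by (rule refl_group_subset_roots_of_unity)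
      (auto simp: cmod_alpha cmod_beta alpha_def beta_power_2m[OF m])
  moreover have "finite {c::complex. c ^ (2 * m) = 1}"
    by (rule finite_roots_unity) (use m in simp)
  ultimately show ?thesis by (meson finite_Un finite_imageI finite_subset)
qed


definition alt_prod ::
  "(('b::real_inner \<Rightarrow> 'b) \<Rightarrow> 'q::comm_ring_1 \<Rightarrow> 'q) \<Rightarrow> ('b \<Rightarrow> 'q) \<Rightarrow> 'b \<Rightarrow> 'b \<Rightarrow> nat \<Rightarrow> 'q" where
  "alt_prod act y a b r = (\<Prod>j<r. act (salt a b j) (y (if even j then a else b)))"

lemma upsilon_eq_alt_prod: "upsilon act y a b m i = alt_prod act y a b (m - i)"
  by (simp add: upsilon_def alt_prod_def atLeast0LessThan)

locale dihedral_action =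
  fixes m :: nat
    and act :: "(complex \<Rightarrow> complex) \<Rightarrow> 'q::comm_ring_1 \<Rightarrow> 'q"
    and y :: "complex \<Rightarrow> 'q"
  assumes two_le_m: "2 \<le> m"
    and act_id: "act id = id"
    and act_comp: "\<And>v w. v \<in> Wdih m \<Longrightarrow> w \<in> Wdih m \<Longrightarrow> act (v \<circ> w) = act v \<circ> act w"
    and act_add: "\<And>w p q. w \<in> Wdih m \<Longrightarrow> act w (p + q) = act w p + act w q"
    and act_mult: "\<And>w p q. w \<in> Wdih m \<Longrightarrow> act w (p * q) = act w p * act w q"
    and act_one: "\<And>w. w \<in> Wdih m \<Longrightarrow> act w 1 = 1"
begin

declare salt.simps(2) [simp del] Xalt.simps(2) [simp del]

abbreviation W :: "(complex \<Rightarrow> complex) set" where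
  "W \<equiv> Wdih m"

abbreviation X :: "nat \<Rightarrow> complex \<Rightarrow> complex \<Rightarrow> (complex \<Rightarrow> complex) \<Rightarrow> 'q" where
  "X n a b \<equiv> Xalt W act y a b n"

lemma finite_W: "finite W"
  using finite_Wdih two_le_m by simp

lemma id_in_W: "id \<in> W"
  unfolding Wdih_def by (rule refl_group.id_in)

lemma rrefl_comp_in_W: "simple_pair m a b \<Longrightarrow> u \<in> W \<Longrightarrow> rrefl a \<circ> u \<in> W"
  unfolding Wdih_def by (rule refl_group.step) (auto simp: simple_pair_def)

lemma rrefl_in_W: "simple_pair m a b \<Longrightarrow> rrefl a \<in> W"
  using rrefl_comp_in_W[OF _ id_in_W] by simp

lemma salt_in_W: "simple_pair m a b \<Longrightarrow> salt a b j \<in> W"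
proof (induction j arbitrary: a b)
  case 0
  show ?case by (simp only: salt.simps id_in_W)
next
  case (Suc j)
  show ?case unfolding salt.simps
    by (rule rrefl_comp_in_W[OF Suc.prems Suc.IH[OF simple_pair_swap[OF Suc.prems]]])
qed

lemma simple_pair_nonzero: "simple_pair m a b \<Longrightarrow> a \<noteq> 0"
  using simple_pair_cmod by fastforce

lemma rrefl_comp_rrefl_comp: "simple_pair m a b \<Longrightarrow> rrefl a \<circ> (rrefl a \<circ> u) = u"
  using rrefl_rrefl[OF simple_pair_nonzero] by (auto simp: fun_eq_iff)

lemma rrefl_comp_salt_Suc: "simple_pair m a b \<Longrightarrow> rrefl a \<circ> salt a b (Suc j) = salt b a j"
  using rrefl_comp_rrefl_comp by (simp add: salt.simps(2))

lemma act_zero: "w \<in> W \<Longrightarrow> act w 0 = 0"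
  using act_add[of w 0 0] by simp

lemma act_uminus: "w \<in> W \<Longrightarrow> act w (- p) = - act w p"
  using minus_unique[of "act w p" "act w (- p)"] act_add[of w p "- p"] act_zero[of w] by simp

lemma act_minus_one_power: "w \<in> W \<Longrightarrow> act w ((- 1) ^ r) = (- 1) ^ r"
  by (induction r) (auto simp: act_one act_mult act_uminus)

lemma act_prod: "w \<in> W \<Longrightarrow> act w (\<Prod>j\<in>A. f j) = (\<Prod>j\<in>A. act w (f j))"
  by (induction A rule: infinite_finite_induct) (auto simp: act_one act_mult)

lemma act_sum: "w \<in> W \<Longrightarrow> act w (\<Sum>j\<in>A. f j) = (\<Sum>j\<in>A. act w (f j))"
  by (induction A rule: infinite_finite_induct) (auto simp: act_zero act_add)

lemma act_salt_Suc:
  "simple_pair m a b \<Longrightarrow> act (salt a b (Suc j)) p = act (rrefl a) (act (salt b a j) p)"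
  using act_comp[OF rrefl_in_W salt_in_W[OF simple_pair_swap]] by (simp add: salt.simps(2))

lemma Xalt_Suc_apply:
  assumes p: "simple_pair m a b" and u: "u \<in> W"
  shows "X (Suc n) a b u = y a * (X n b a u - act (rrefl a) (X n b a (rrefl a \<circ> u)))"
proof -
  let ?S = "{(v, w). v \<in> W \<and> w \<in> W \<and> v \<circ> w = u}"
  let ?f = "\<lambda>(v, w). qw_X y a v * act v (X n b a w)"
  let ?T = "{(id, u), (rrefl a, rrefl a \<circ> u)}"
  have s_neq_id: "rrefl a \<noteq> id"
    using rrefl_neq_id[OF simple_pair_nonzero[OF p]] .
  have fin: "finite ?S"
    by (rule finite_subset[of _ "W \<times> W"]) (auto simp: finite_W)
  have TS: "?T \<subseteq> ?S"
    using id_in_W rrefl_in_W[OF p] rrefl_comp_in_W[OF p u] rrefl_comp_rrefl_comp[OF p] u by auto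
  have "?f vw = 0" if vw: "vw \<in> ?S - ?T" for vw
  proof -
    obtain v w where vw': "vw = (v, w)" "v \<circ> w = u" using vw by auto
    then have "v \<noteq> id" using vw by auto
    moreover have "v \<noteq> rrefl a"
      using vw vw' rrefl_comp_rrefl_comp[OF p, of w] by auto
    ultimately show ?thesis using vw' by (simp add: qw_X_def qw_delta_def)
  qed
  then have "sum ?f ?S = sum ?f ?T"
    by (intro sum.mono_neutral_right[OF fin TS]) blast
  also have "\<dots> = y a * (X n b a u - act (rrefl a) (X n b a (rrefl a \<circ> u)))"
    using s_neq_id by (simp add: qw_X_def qw_delta_def act_id algebra_simps)
  finally show ?thesis by (simp add: qw_mult_def Xalt.simps(2))
qed

lemma alt_prod_Suc:
  assumes p: "simple_pair m a b"
  shows "alt_prod act y a b (Suc n) = y a * act (rrefl a) (alt_prod act y b a n)"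
proof -
  have parity: "(if even (Suc j) then a else b) = (if even j then b else a)" for j
    by simp
  have "alt_prod act y a b (Suc n)
      = y a * (\<Prod>j<n. act (salt a b (Suc j)) (y (if even (Suc j) then a else b)))"
    unfolding alt_prod_def prod.lessThan_Suc_shift by (simp add: act_id)
  also have "\<dots> = y a * (\<Prod>j<n. act (rrefl a) (act (salt b a j) (y (if even j then b else a))))"
    unfolding parity act_salt_Suc[OF p] ..
  also have "\<dots> = y a * act (rrefl a) (alt_prod act y b a n)"
    by (simp add: alt_prod_def act_prod[OF rrefl_in_W[OF p]])
  finally show ?thesis .
qed

lemma Ssum_Suc:
  assumes p: "simple_pair m a b"
  shows "Ssum act a b 0 (Suc n) (y a * y b)
    = y a * y b + act (rrefl a) (Ssum act b a 0 n (y b * y a))"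
proof -
  have "Ssum act a b 0 (Suc n) (y a * y b)
      = y a * y b + (\<Sum>k\<le>n. act (salt a b (Suc k)) (y a * y b))"
    unfolding Ssum_def atLeast0AtMost sum.atMost_Suc_shift by (simp add: act_id)
  also have "\<dots> = y a * y b + act (rrefl a) (Ssum act b a 0 n (y b * y a))"
    by (simp add: Ssum_def atLeast0AtMost act_salt_Suc[OF p] act_sum[OF rrefl_in_W[OF p]]
        mult.commute)
  finally show ?thesis .
qed

lemma Xalt_salt_eq_0:
  assumes "simple_pair m a b" "k < j" "j + k \<le> 2 * m - 3"
  shows "X k a b (salt a b j) = 0 \<and> X k a b (salt b a j) = 0"
  using assms
proof (induction k arbitrary: a b j)
  case 0
  then have "0 < j" "j < 2 * m" using two_le_m by auto
  then have "salt a b j \<noteq> id" "salt b a j \<noteq> id"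
    using salt_neq_id 0(1) simple_pair_swap by blast+
  then show ?case by (simp add: qw_delta_def)
next
  case (Suc k)
  note p = Suc.prems(1)
  obtain j' where j': "j = Suc j'" using Suc.prems(2) by (cases j) auto
  have p': "simple_pair m b a" using simple_pair_swap[OF p] .
  have "X (Suc k) a b (salt a b j)
      = y a * (X k b a (salt a b j) - act (rrefl a) (X k b a (salt b a j')))"
    using Xalt_Suc_apply[OF p salt_in_W[OF p]] rrefl_comp_salt_Suc[OF p] j' by simp
  moreover have "X (Suc k) a b (salt b a j)
      = y a * (X k b a (salt b a j) - act (rrefl a) (X k b a (salt a b (Suc j))))"
    using Xalt_Suc_apply[OF p salt_in_W[OF p']] by (simp add: salt.simps(2))
  ultimately show ?case
    using Suc.IH[OF p'] Suc.prems j' by (auto simp: act_zero[OF rrefl_in_W[OF p]])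
qed

lemma Xalt_salt_same_length:
  "simple_pair m a b \<Longrightarrow> n + 1 \<le> m \<Longrightarrow> X n a b (salt a b n) = (- 1) ^ n * alt_prod act y a b n"
proof (induction n arbitrary: a b)
  case 0
  then show ?case by (simp add: qw_delta_def alt_prod_def id_def)
next
  case (Suc n)
  have p: "simple_pair m a b" and p': "simple_pair m b a"
    using Suc.prems simple_pair_swap by auto
  have "X n b a (salt a b (Suc n)) = 0"
    using Xalt_salt_eq_0[OF p'] Suc.prems(2) by simp
  then have "X (Suc n) a b (salt a b (Suc n)) = - y a * act (rrefl a) (X n b a (salt b a n))"
    using Xalt_Suc_apply[OF p salt_in_W[OF p]] rrefl_comp_salt_Suc[OF p] by simp
  also have "\<dots> = (- 1) ^ Suc n * (y a * act (rrefl a) (alt_prod act y b a n))"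
    using Suc.IH[OF p'] Suc.prems(2)
    by (simp add: act_mult[OF rrefl_in_W[OF p]] act_minus_one_power[OF rrefl_in_W[OF p]])
  finally show ?case by (simp add: alt_prod_Suc[OF p])
qed

lemma Xalt_Suc_salt_swap:
  assumes p: "simple_pair m a b" and k: "k + 2 \<le> m"
  shows "X (Suc k) b a (salt a b k) = y b * ((- 1) ^ k * alt_prod act y a b k)"
proof -
  have p': "simple_pair m b a" using simple_pair_swap[OF p] .
  have "X k a b (salt b a (Suc k)) = 0"
    using Xalt_salt_eq_0[OF p] k by simp
  then have "X (Suc k) b a (salt a b k) = y b * X k a b (salt a b k)"
    using Xalt_Suc_apply[OF p' salt_in_W[OF p]]
    by (simp add: act_zero[OF rrefl_in_W[OF p']] flip: salt.simps(2))
  then show ?thesis using Xalt_salt_same_length[OF p] k by simp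
qed

lemma Xalt_Suc_Suc_salt:
  "simple_pair m a b \<Longrightarrow> r + 2 \<le> m \<Longrightarrow>
    X (Suc (Suc r)) a b (salt a b r)
      = (- 1) ^ r * alt_prod act y a b r * Ssum act a b 0 r (y a * y b)"
proof (induction r arbitrary: a b)
  case 0
  have p: "simple_pair m a b" and p': "simple_pair m b a"
    using 0 simple_pair_swap by auto
  have sa: "rrefl a \<noteq> id" and sb: "rrefl b \<noteq> id"
    using rrefl_neq_id simple_pair_nonzero p p' by blast+
  have "salt b a 2 \<noteq> id"
    using salt_neq_id[OF p', of 2] two_le_m by simp
  then have sba: "rrefl b \<circ> rrefl a \<noteq> id"
    by (simp add: numeral_2_eq_2 salt.simps(2))
  have "X 1 b a id = y b" and "X 1 b a (rrefl a) = 0"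
    using Xalt_Suc_apply[OF p' id_in_W, of 0] Xalt_Suc_apply[OF p' rrefl_in_W[OF p], of 0] sa sb sba
    by (simp_all add: qw_delta_def act_zero[OF rrefl_in_W[OF p']])
  then have "X 2 a b id = y a * y b"
    using Xalt_Suc_apply[OF p id_in_W, of 1] by (simp add: numeral_2_eq_2 act_zero[OF rrefl_in_W[OF p]])
  moreover have "alt_prod act y a b 0 * Ssum act a b 0 0 (y a * y b) = y a * y b"
    by (simp add: alt_prod_def Ssum_def act_id)
  ultimately show ?case by (simp only: numeral_2_eq_2 salt.simps(1) power_0 mult_1_left)
next
  case (Suc r)
  have p: "simple_pair m a b" and p': "simple_pair m b a"
    using Suc.prems simple_pair_swap by auto
  let ?s = "act (rrefl a)"
  have "X (Suc (Suc (Suc r))) a b (salt a b (Suc r))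
      = y a * (X (Suc (Suc r)) b a (salt a b (Suc r)) - ?s (X (Suc (Suc r)) b a (salt b a r)))"
    using Xalt_Suc_apply[OF p salt_in_W[OF p]] rrefl_comp_salt_Suc[OF p] by simp
  also have "\<dots> = y a * (y b * ((- 1) ^ Suc r * (y a * ?s (alt_prod act y b a r)))
      - (- 1) ^ r * ?s (alt_prod act y b a r) * ?s (Ssum act b a 0 r (y b * y a)))"
    using Xalt_Suc_salt_swap[OF p] Suc.IH[OF p'] Suc.prems(2)
    by (simp add: alt_prod_Suc[OF p] act_mult[OF rrefl_in_W[OF p]]
        act_minus_one_power[OF rrefl_in_W[OF p]])
  also have "\<dots> = (- 1) ^ Suc r * (y a * ?s (alt_prod act y b a r))
      * (y a * y b + ?s (Ssum act b a 0 r (y b * y a)))"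
    by (simp add: algebra_simps)
  finally show ?case by (simp only: alt_prod_Suc[OF p] Ssum_Suc[OF p])
qed

end

theorem lemma6p3:
  fixes m :: nat
    and act :: "(complex \<Rightarrow> complex) \<Rightarrow> 'q::comm_ring_1 \<Rightarrow> 'q"
    and x y :: "complex \<Rightarrow> 'q"
  assumes m3: "m \<ge> 3"
    and act_id: "act id = id"
    and act_comp: "\<And>v w. v \<in> Wdih m \<Longrightarrow> w \<in> Wdih m \<Longrightarrow> act (v \<circ> w) = act v \<circ> act w"
    and act_add: "\<And>w p q. w \<in> Wdih m \<Longrightarrow> act w (p + q) = act w p + act w q"
    and act_mult: "\<And>w p q. w \<in> Wdih m \<Longrightarrow> act w (p * q) = act w p * act w q"
    and act_one: "\<And>w. w \<in> Wdih m \<Longrightarrow> act w 1 = 1"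
    and act_x: "\<And>w g. w \<in> Wdih m \<Longrightarrow> g \<in> Sigma m \<Longrightarrow> act w (x g) = x (w g)"
    and xy: "\<And>g. g \<in> Sigma m \<Longrightarrow> x g * y g = 1"
  shows "(Xalt (Wdih m) act y alpha (beta m) m (salt alpha (beta m) (m - 2))
           = (if even m then 1 else - 1)
             * upsilon act y alpha (beta m) m 2
             * Ssum act alpha (beta m) 0 (m - 2) (y alpha * y (beta m)))
       \<and> (Xalt (Wdih m) act y (beta m) alpha m (salt (beta m) alpha (m - 2))
           = (if even m then 1 else - 1)
             * upsilon act y (beta m) alpha m 2
             * Ssum act (beta m) alpha 0 (m - 2) (y (beta m) * y alpha))"
proof -
  interpret dihedral_action m act y
    using m3 act_id act_comp act_add act_mult act_one by unfold_locales auto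
  have pairs: "simple_pair m alpha (beta m)" "simple_pair m (beta m) alpha"
    by (auto simp: simple_pair_def)
  have m: "m - 2 + 2 \<le> m" "Suc (Suc (m - 2)) = m" using m3 by auto
  have sign: "(- 1 :: 'q) ^ (m - 2) = (if even m then 1 else - 1)"
    using m3 by (simp add: minus_one_power_iff)
  show ?thesis
    using Xalt_Suc_Suc_salt[OF pairs(1) m(1)] Xalt_Suc_Suc_salt[OF pairs(2) m(1)]
    unfolding m(2) sign upsilon_eq_alt_prod by simp
qed

end
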